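(* Let $K$ be a finite ordered simplicial complex in $\mathbb{R}^N$ and let $\{U_i\}$ be a locally finite cover of $\mathbb{R}^N$ by convex open sets. Then for all sufficiently large $\ell$, the subcomplexes $K_\ell\cap U_i$ are nice and cover $K_\ell$ (every simplex of $K_\ell$ lies in some $K_\ell\cap U_i$).
   Context: A simplicial complex is a locally finite set of linear simplices in $\mathbb{R}^N$ closed under faces with pairwise intersections common faces; ordered means vertices totally ordered. $K_\ell$ is the $\ell$th crystalline subdivision: for an ordered $m$-simplex $\langle v_0,\dots,v_m\rangle$, $m>0$, let $\iota$ be affine into $[0,1]^m$ with $\iota(v_j)=(0,\dots,0,1,\dots,1)$ ($j$ zeros), subdivide $[0,1]^m$ into $2^{\ell m}$ cubes of side $2^{-\ell}$, each into the $m!$ rescaled translates of $\{0\le x_{\pi(1)}\le\dots\le x_{\pi(m)}\le1\}$, and pull back via $\iota$. $K\cap U$ is the maximal subcomplex of $K$ contained in $U$. For a subcomplex $K'$ and $\Delta\in K$, $\Delta\cap K'$ denotes the simplices of $K'$ that are faces of $\Delta$; $\operatorname{star}(K')$ is the set of simplices sharing a face with some simplex of $K'$, with their faces; $K'$ is nice if for every $\Delta\in\operatorname{star}(K')$, $\Delta\cap K'$ is a single face of $\Delta$ (with its faces). *)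

theory Defs
  imports "HOL-Analysis.Analysis"
begin

text \<open>Simplicial complexes are taken in the sense of the library predicate
  simplicial_complex (HOL-Analysis, Polytope): a finite set of geometric simplices
  (point sets), closed under faces (including the empty face), with pairwise
  intersections being common faces.\<close>

definition simplex_vertices :: "'a::euclidean_space set \<Rightarrow> 'a set" where
  "simplex_vertices S = {v. v extreme_point_of S}"

definition complex_vertices :: "'a::euclidean_space set set \<Rightarrow> 'a set" where
  "complex_vertices K = (\<Union>S\<in>K. simplex_vertices S)"

definition ordered_complex :: "'a::euclidean_space set set \<Rightarrow> 'a rel \<Rightarrow> bool" where
  "ordered_complex K r \<longleftrightarrow> simplicial_complex K \<and> linear_order_on (complex_vertices K) r"

text \<open>Points of [0,1]^m are functions nat => real with coordinates 1..m.
  The image of the ordered simplex under iota is the region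
  0 <= x_1 <= ... <= x_m <= 1.\<close>
definition cryst_region :: "nat \<Rightarrow> (nat \<Rightarrow> real) \<Rightarrow> bool" where
  "cryst_region m x \<longleftrightarrow>
     (\<forall>i j. 1 \<le> i \<and> i \<le> j \<and> j \<le> m \<longrightarrow> x i \<le> x j) \<and>
     (\<forall>i. 1 \<le> i \<and> i \<le> m \<longrightarrow> 0 \<le> x i \<and> x i \<le> 1)"

text \<open>Inverse of iota: the affine map with (0^j,1^(m-j)) |-> v_j.\<close>
definition cryst_param :: "(nat \<Rightarrow> 'a::euclidean_space) \<Rightarrow> nat \<Rightarrow> (nat \<Rightarrow> real) \<Rightarrow> 'a" where
  "cryst_param vs m x = vs m + (\<Sum>i\<in>{1..m}. x i *\<^sub>R (vs (i - 1) - vs i))"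

text \<open>The j-th vertex (j = 0..m) of the small simplex in the cube with lower corner
  k/2^l (k integer vector) associated with the permutation p of {1..m}, i.e. of
  the rescaled translate of {0 <= y_p(1) <= ... <= y_p(m) <= 1}.\<close>
definition cube_simplex_vertex :: "nat \<Rightarrow> nat \<Rightarrow> (nat \<Rightarrow> int) \<Rightarrow> (nat \<Rightarrow> nat) \<Rightarrow> nat \<Rightarrow> (nat \<Rightarrow> real)" where
  "cube_simplex_vertex m l k p j =
     (\<lambda>i. (real_of_int (k i) + (if i \<in> p ` {j+1..m} then 1 else 0)) / 2 ^ l)"

text \<open>The top-dimensional simplices of the l-th crystalline subdivision of the
  simplex S of the ordered complex (K, r): pull backs of the small cube simplices
  lying in the image of S.\<close>
definition cryst_pieces :: "'a::euclidean_space rel \<Rightarrow> nat \<Rightarrow> 'a set \<Rightarrow> 'a set set" where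
  "cryst_pieces r l S =
     {T. \<exists>m vs k p.
           card (simplex_vertices S) = Suc m \<and>
           vs ` {0..m} = simplex_vertices S \<and>
           (\<forall>i<m. (vs i, vs (Suc i)) \<in> r) \<and>
           bij_betw p {1..m} {1..m} \<and>
           (\<forall>j\<le>m. cryst_region m (cube_simplex_vertex m l k p j)) \<and>
           T = convex hull {cryst_param vs m (cube_simplex_vertex m l k p j) | j. j \<le> m}}"

definition cryst_subdiv :: "'a::euclidean_space set set \<Rightarrow> 'a rel \<Rightarrow> nat \<Rightarrow> 'a set set" where
  "cryst_subdiv K r l = {F. \<exists>S\<in>K. \<exists>T\<in>cryst_pieces r l S. F face_of T}"

definition complex_restrict :: "'a::euclidean_space set set \<Rightarrow> 'a set \<Rightarrow> 'a set set" where
  "complex_restrict K U = {S\<in>K. S \<subseteq> U}"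

definition simplex_meet :: "'a::euclidean_space set \<Rightarrow> 'a set set \<Rightarrow> 'a set set" where
  "simplex_meet D K' = {T\<in>K'. T face_of D}"

definition complex_star :: "'a::euclidean_space set set \<Rightarrow> 'a set set \<Rightarrow> 'a set set" where
  "complex_star K K' =
     {F. \<exists>D\<in>K. F face_of D \<and>
          (\<exists>T\<in>K'. \<exists>G. G \<noteq> {} \<and> G face_of D \<and> G face_of T)}"

definition nice_subcomplex :: "'a::euclidean_space set set \<Rightarrow> 'a set set \<Rightarrow> bool" where
  "nice_subcomplex K K' \<longleftrightarrow>
     (\<forall>D\<in>complex_star K K'. \<exists>F. F face_of D \<and> simplex_meet D K' = {G. G face_of F})"

definition locally_finite_family :: "('i \<Rightarrow> 'a::topological_space set) \<Rightarrow> bool" where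
  "locally_finite_family U \<longleftrightarrow>
     (\<forall>x. \<exists>N. open N \<and> x \<in> N \<and> finite {i. U i \<inter> N \<noteq> {}})"

end

theory Submission
  imports Defs
begin

(* Every top simplex of K_l is the image of a small simplex of the cube subdivision under the
   affine map cryst_param, which is injective because the edges v_(i-1) - v_i of an ordered
   simplex are linearly independent; hence every simplex of K_l is the convex hull of an
   affinely independent set P. The faces of conv P lying in a convex set U are then exactly the
   faces of conv (P \<inter> U), which makes K_l \<inter> U nice for every l. For the covering, all simplices
   of K_l lie in a fixed ball and have diameter O(2^-l), so they eventually fall below a Lebesgue
   number of the open cover. *)

definition affine_independent_family :: "(nat \<Rightarrow> 'a::real_vector) \<Rightarrow> nat \<Rightarrow> bool" where
  "affine_independent_family f n \<longleftrightarrow>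
     (\<forall>u. sum u {..n} = 0 \<and> (\<Sum>j\<le>n. u j *\<^sub>R f j) = 0 \<longrightarrow> (\<forall>j\<le>n. u j = 0))"

lemma affine_independent_family_inj:
  assumes "affine_independent_family f n"
  shows "inj_on f {..n}"
proof (rule inj_onI, rule ccontr)
  fix i j assume ij: "i \<in> {..n}" "j \<in> {..n}" "f i = f j" "i \<noteq> j"
  define u where "u k = (if k = i then 1 else 0) - (if k = j then 1 else (0::real))" for k
  have "sum u {..n} = 0" using ij by (simp add: u_def sum_subtractf)
  moreover have "(\<Sum>k\<le>n. u k *\<^sub>R f k) = 0"
    using ij by (simp add: u_def scaleR_left_diff_distrib sum_subtractf
        if_distrib[of "\<lambda>c. c *\<^sub>R _"] cong: if_cong)
  ultimately have "u i = 0" using assms ij unfolding affine_independent_family_def by blast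
  then show False using ij by (simp add: u_def)
qed

lemma affine_independent_family_iff:
  "affine_independent_family f n \<longleftrightarrow> inj_on f {..n} \<and> \<not> affine_dependent (f ` {..n})"
proof
  assume indep: "affine_independent_family f n"
  then have inj: "inj_on f {..n}" by (rule affine_independent_family_inj)
  moreover have "\<not> affine_dependent (f ` {..n})"
  proof
    assume "affine_dependent (f ` {..n})"
    then obtain U where U: "sum U (f ` {..n}) = 0" "\<exists>v\<in>f ` {..n}. U v \<noteq> 0"
        "(\<Sum>v\<in>f ` {..n}. U v *\<^sub>R v) = 0"
      using affine_dependent_explicit_finite[of "f ` {..n}"] by auto
    have "sum (U \<circ> f) {..n} = 0" "(\<Sum>j\<le>n. (U \<circ> f) j *\<^sub>R f j) = 0"
      using U(1,3) sum.reindex[OF inj, of U] sum.reindex[OF inj, of "\<lambda>v. U v *\<^sub>R v"] by simp_all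
    then have "\<forall>j\<le>n. (U \<circ> f) j = 0" using indep unfolding affine_independent_family_def by blast
    then show False using U(2) by auto
  qed
  ultimately show "inj_on f {..n} \<and> \<not> affine_dependent (f ` {..n})" ..
next
  assume "inj_on f {..n} \<and> \<not> affine_dependent (f ` {..n})"
  then have inj: "inj_on f {..n}" and indep: "\<not> affine_dependent (f ` {..n})" by auto
  show "affine_independent_family f n"
    unfolding affine_independent_family_def
  proof (rule allI, rule impI)
    fix u assume u: "sum u {..n} = 0 \<and> (\<Sum>j\<le>n. u j *\<^sub>R f j) = 0"
    define U where "U = u \<circ> inv_into {..n} f"
    have Uf: "U (f j) = u j" if "j \<le> n" for j using inj that by (simp add: U_def inv_into_f_f)
    have "sum U (f ` {..n}) = 0" "(\<Sum>v\<in>f ` {..n}. U v *\<^sub>R v) = 0"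
      using u Uf sum.reindex[OF inj, of U] sum.reindex[OF inj, of "\<lambda>v. U v *\<^sub>R v"] by simp_all
    then have "\<forall>v\<in>f ` {..n}. U v = 0"
      using indep affine_dependent_explicit_finite[of "f ` {..n}"] by blast
    then show "\<forall>j\<le>n. u j = 0" using Uf by auto
  qed
qed

lemma sum_scaleR_consecutive_diffs:
  "(\<Sum>i\<in>{1..m}. c i *\<^sub>R (v (i - 1) - v i)) =
     (\<Sum>i\<le>m. (c (Suc i) - c i) *\<^sub>R v i) - c (Suc m) *\<^sub>R v m + c 0 *\<^sub>R (v 0 :: 'a::real_vector)"
proof (induction m)
  case 0
  then show ?case by (simp add: algebra_simps)
next
  case (Suc m)
  have "{1..Suc m} = insert (Suc m) {1..m}" by auto
  then show ?case using Suc by (simp add: algebra_simps)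
qed

lemma consecutive_diffs_independent:
  assumes "affine_independent_family v m"
    and "(\<Sum>i\<in>{1..m}. c i *\<^sub>R (v (i - 1) - v i)) = 0"
  shows "\<forall>i\<in>{1..m}. c i = 0"
proof -
  define c' where "c' i = (if 1 \<le> i \<and> i \<le> m then c i else 0)" for i
  define u where "u i = c' (Suc i) - c' i" for i
  have "(\<Sum>i\<in>{1..m}. c' i *\<^sub>R (v (i - 1) - v i)) = 0"
    using assms(2) by (simp add: c'_def)
  then have "(\<Sum>i\<le>m. u i *\<^sub>R v i) = 0"
    using sum_scaleR_consecutive_diffs[where c=c' and m=m and v=v] by (simp add: u_def c'_def)
  moreover have "sum u {..m} = 0"
    using sum_lessThan_telescope[of c' "Suc m"] by (simp add: u_def c'_def lessThan_Suc_atMost)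
  ultimately have u0: "\<forall>i\<le>m. u i = 0"
    using assms(1) unfolding affine_independent_family_def by blast
  have "c' i = 0" if "i \<le> Suc m" for i
    using that
  proof (induction i)
    case 0
    then show ?case by (simp add: c'_def)
  next
    case (Suc i)
    then show ?case using u0 by (simp add: u_def)
  qed
  then show ?thesis by (metis atLeastAtMost_iff c'_def le_SucI)
qed

lemma sum_scaleR_cryst_param:
  "(\<Sum>j\<le>n. u j *\<^sub>R cryst_param v m (x j)) =
     sum u {..n} *\<^sub>R v m + (\<Sum>i\<in>{1..m}. (\<Sum>j\<le>n. u j * x j i) *\<^sub>R (v (i - 1) - v i))"
  by (simp add: cryst_param_def scaleR_add_right sum.distrib scaleR_sum_right scaleR_sum_left
      sum.swap[of _ "{..n}"])

lemma affine_independent_family_cryst_vertices: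
  assumes "affine_independent_family v m" and p: "bij_betw p {1..m} {1..m}"
  shows "affine_independent_family (\<lambda>j. cryst_param v m (cube_simplex_vertex m l k p j)) m"
  unfolding affine_independent_family_def
proof (rule allI, rule impI)
  define w where "w = cube_simplex_vertex m l k p"
  fix u assume u: "sum u {..m} = 0 \<and>
    (\<Sum>j\<le>m. u j *\<^sub>R cryst_param v m (cube_simplex_vertex m l k p j)) = 0"
  then have "(\<Sum>i\<in>{1..m}. (\<Sum>j\<le>m. u j * w j i) *\<^sub>R (v (i - 1) - v i)) = 0"
    using sum_scaleR_cryst_param[where u=u and n=m and v=v and m=m and x=w] by (simp add: w_def)
  then have coord0: "\<forall>i\<in>{1..m}. (\<Sum>j\<le>m. u j * w j i) = 0"
    by (rule consecutive_diffs_independent[OF assms(1), where c="\<lambda>i. \<Sum>j\<le>m. u j * w j i"])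
  have partial_sum0: "(\<Sum>j<t. u j) = 0" if "t \<le> Suc m" for t
  proof (cases "t = 0 \<or> t = Suc m")
    case True
    then show ?thesis using u by (auto simp: lessThan_Suc_atMost)
  next
    case False
    then have t: "t \<in> {1..m}" using that by auto
    \<comment> \<open>coordinate p t of the vertex w j is raised by 2^-l exactly for j < t\<close>
    have "p t \<in> p ` {Suc j..m} \<longleftrightarrow> j < t" for j
    proof
      assume "p t \<in> p ` {Suc j..m}"
      then obtain s where "s \<in> {Suc j..m}" "p t = p s" by auto
      then show "j < t" using t bij_betw_imp_inj_on[OF p] by (auto dest: inj_onD)
    qed (use t in auto)
    then have "u j * w j (p t) = (u j * of_int (k (p t)) + (if j < t then u j else 0)) / 2 ^ l" for j
      by (simp add: w_def cube_simplex_vertex_def ring_distribs)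
    then have "(\<Sum>j\<le>m. u j * w j (p t)) =
        (sum u {..m} * of_int (k (p t)) + (\<Sum>j\<le>m. if j < t then u j else 0)) / 2 ^ l"
      by (simp add: sum_divide_distrib[symmetric] sum.distrib sum_distrib_right)
    moreover have "(\<Sum>j\<le>m. if j < t then u j else 0) = (\<Sum>j\<in>{..m} \<inter> {..<t}. u j)"
      by (simp add: sum.inter_restrict)
    moreover have "{..m} \<inter> {..<t} = {..<t}" using t by auto
    ultimately show ?thesis using coord0 bij_betw_apply[OF p t] u by simp
  qed
  show "\<forall>j\<le>m. u j = 0"
  proof (intro allI impI)
    fix j assume "j \<le> m"
    then show "u j = 0" using partial_sum0[of "Suc j"] partial_sum0[of j] by simp
  qed
qed

lemma simplex_vertices_subset: "simplex_vertices S \<subseteq> S"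
  by (auto simp: simplex_vertices_def extreme_point_of_def)

lemma affine_independent_simplex_vertices:
  assumes "n simplex S"
  shows "\<not> affine_dependent (simplex_vertices S)"
proof -
  obtain C where C: "\<not> affine_dependent C" "S = convex hull C" using assms simplex_def by blast
  then have "simplex_vertices S \<subseteq> C"
    by (auto simp: simplex_vertices_def dest: extreme_point_of_convex_hull)
  then show ?thesis using C(1) affine_independent_subset by blast
qed

lemma cryst_piecesE:
  assumes "T \<in> cryst_pieces r l S"
  obtains m v k p where "card (simplex_vertices S) = Suc m" "v ` {..m} = simplex_vertices S"
    "bij_betw p {1..m} {1..m}" "\<forall>j\<le>m. cryst_region m (cube_simplex_vertex m l k p j)"
    "T = convex hull ((\<lambda>j. cryst_param v m (cube_simplex_vertex m l k p j)) ` {..m})"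
proof -
  from assms obtain m v k p where
    "card (simplex_vertices S) = Suc m" "v ` {0..m} = simplex_vertices S"
    "bij_betw p {1..m} {1..m}" "\<forall>j\<le>m. cryst_region m (cube_simplex_vertex m l k p j)"
    "T = convex hull {cryst_param v m (cube_simplex_vertex m l k p j) | j. j \<le> m}"
    unfolding cryst_pieces_def by blast
  moreover have "{cryst_param v m (cube_simplex_vertex m l k p j) | j. j \<le> m}
      = (\<lambda>j. cryst_param v m (cube_simplex_vertex m l k p j)) ` {..m}" by auto
  ultimately show ?thesis using that by (simp add: atLeast0AtMost)
qed

lemma cryst_piece_affine_independent_hull:
  assumes "n simplex S" "T \<in> cryst_pieces r l S"
  obtains P where "\<not> affine_dependent P" "T = convex hull P"
proof -
  obtain m v k p where card: "card (simplex_vertices S) = Suc m"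
    and v: "v ` {..m} = simplex_vertices S" and p: "bij_betw p {1..m} {1..m}"
    and T: "T = convex hull ((\<lambda>j. cryst_param v m (cube_simplex_vertex m l k p j)) ` {..m})"
    using cryst_piecesE[OF assms(2)] by metis
  have "inj_on v {..m}" using card v by (intro eq_card_imp_inj_on) auto
  then have "affine_independent_family v m"
    using v affine_independent_simplex_vertices[OF assms(1)] affine_independent_family_iff by metis
  then show ?thesis
    using affine_independent_family_cryst_vertices[OF _ p] affine_independent_family_iff T that
    by metis
qed

lemma faces_of_simplex_within_convex:
  fixes P :: "'a::euclidean_space set"
  assumes "\<not> affine_dependent P" "convex U"
  shows "\<exists>F. F face_of convex hull P \<and>
           {G. G face_of convex hull P \<and> G \<subseteq> U} = {G. G face_of F}"
proof (intro exI conjI)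
  have indep: "\<not> affine_dependent (P \<inter> U)" using assms(1) affine_independent_subset by blast
  have hull_in_U: "convex hull Q \<subseteq> U \<longleftrightarrow> Q \<subseteq> U" for Q
    using assms(2) hull_subset[of Q convex] hull_minimal[of Q U convex] by blast
  show "convex hull (P \<inter> U) face_of convex hull P"
    using face_of_convex_hull_affine_independent[OF assms(1)] by blast
  show "{G. G face_of convex hull P \<and> G \<subseteq> U} = {G. G face_of convex hull (P \<inter> U)}"
    unfolding face_of_convex_hull_affine_independent[OF assms(1)]
      face_of_convex_hull_affine_independent[OF indep]
    using hull_in_U by blast
qed

lemma nice_subcomplex_restrict_convex:
  fixes K :: "'a::euclidean_space set set"
  assumes faces: "\<And>D F. D \<in> K \<Longrightarrow> F face_of D \<Longrightarrow> F \<in> K"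
    and simplices: "\<And>D. D \<in> K \<Longrightarrow> \<exists>P. \<not> affine_dependent P \<and> D = convex hull P"
    and "convex U"
  shows "nice_subcomplex K (complex_restrict K U)"
  unfolding nice_subcomplex_def
proof
  fix D assume "D \<in> complex_star K (complex_restrict K U)"
  then have "D \<in> K" unfolding complex_star_def using faces by blast
  then obtain P where P: "\<not> affine_dependent P" "D = convex hull P" using simplices by blast
  have "simplex_meet D (complex_restrict K U) = {G. G face_of D \<and> G \<subseteq> U}"
    unfolding simplex_meet_def complex_restrict_def using faces \<open>D \<in> K\<close> by blast
  then show "\<exists>F. F face_of D \<and> simplex_meet D (complex_restrict K U) = {G. G face_of F}"
    using faces_of_simplex_within_convex[OF P(1) \<open>convex U\<close>] P(2) by simp
qed

lemma cryst_subdiv_face: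
  "D \<in> cryst_subdiv K r l \<Longrightarrow> F face_of D \<Longrightarrow> F \<in> cryst_subdiv K r l"
  unfolding cryst_subdiv_def using face_of_trans by blast

lemma cryst_subdiv_affine_independent_hull:
  assumes "simplicial_complex K" "D \<in> cryst_subdiv K r l"
  shows "\<exists>P. \<not> affine_dependent P \<and> D = convex hull P"
proof -
  obtain S T where "S \<in> K" "T \<in> cryst_pieces r l S" "D face_of T"
    using assms(2) unfolding cryst_subdiv_def by blast
  moreover obtain n where "n simplex S"
    using assms(1) \<open>S \<in> K\<close> unfolding simplicial_complex_def by blast
  ultimately obtain P where "\<not> affine_dependent P" "D face_of convex hull P"
    using cryst_piece_affine_independent_hull by metis
  then show ?thesis
    using face_of_convex_hull_affine_independent affine_independent_subset by metis
qed

lemma norm_consecutive_diffs_combination_le: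
  fixes v :: "nat \<Rightarrow> 'a::real_normed_vector"
  assumes "\<forall>i\<le>m. norm (v i) \<le> B" "\<forall>i\<in>{1..m}. \<bar>c i\<bar> \<le> d"
  shows "norm (\<Sum>i\<in>{1..m}. c i *\<^sub>R (v (i - 1) - v i)) \<le> real m * (d * (2 * B))"
proof -
  have "norm (\<Sum>i\<in>{1..m}. c i *\<^sub>R (v (i - 1) - v i)) \<le> (\<Sum>i\<in>{1..m}. d * (2 * B))"
  proof (rule sum_norm_le)
    fix i assume i: "i \<in> {1..m}"
    have "norm (v (i - 1) - v i) \<le> 2 * B"
      using norm_triangle_ineq4[of "v (i - 1)" "v i"] assms(1) i
      by (smt (verit) atLeastAtMost_iff diff_le_self le_trans)
    moreover have "\<bar>c i\<bar> \<le> d" using assms(2) i by blast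
    ultimately show "norm (c i *\<^sub>R (v (i - 1) - v i)) \<le> d * (2 * B)"
      by (simp add: mult_mono')
  qed
  then show ?thesis by simp
qed

lemma norm_cryst_param_le:
  assumes "\<forall>i\<le>m. norm (v i) \<le> B" "cryst_region m x"
  shows "norm (cryst_param v m x) \<le> (1 + 2 * real m) * B"
proof -
  have "\<forall>i\<in>{1..m}. \<bar>x i\<bar> \<le> 1" using assms(2) by (auto simp: cryst_region_def)
  then have "norm (\<Sum>i\<in>{1..m}. x i *\<^sub>R (v (i - 1) - v i)) \<le> real m * (1 * (2 * B))"
    by (rule norm_consecutive_diffs_combination_le[OF assms(1)])
  moreover have "norm (cryst_param v m x) \<le> norm (v m) + norm (\<Sum>i\<in>{1..m}. x i *\<^sub>R (v (i - 1) - v i))"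
    unfolding cryst_param_def by (rule norm_triangle_ineq)
  moreover have "norm (v m) \<le> B" using assms(1) by simp
  ultimately show ?thesis by (simp add: algebra_simps)
qed

lemma dist_cryst_param_le:
  assumes "\<forall>i\<le>m. norm (v i) \<le> B" "\<forall>i\<in>{1..m}. \<bar>x i - y i\<bar> \<le> d"
  shows "dist (cryst_param v m x) (cryst_param v m y) \<le> real m * (d * (2 * B))"
proof -
  have "cryst_param v m x - cryst_param v m y = (\<Sum>i\<in>{1..m}. (x i - y i) *\<^sub>R (v (i - 1) - v i))"
    by (simp add: cryst_param_def sum_subtractf scaleR_left_diff_distrib)
  then show ?thesis
    using norm_consecutive_diffs_combination_le[OF assms] by (simp add: dist_norm)
qed

lemma abs_cube_simplex_vertex_diff_le:
  "\<bar>cube_simplex_vertex m l k p j i - cube_simplex_vertex m l k p j' i\<bar> \<le> 1 / 2 ^ l"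
  by (simp add: cube_simplex_vertex_def diff_divide_distrib[symmetric])

lemma cryst_piece_subset_cball:
  assumes "S \<subseteq> cball 0 B" "T \<in> cryst_pieces r l S"
  obtains c where "norm c \<le> (1 + 2 * real (card (simplex_vertices S))) * B"
    "T \<subseteq> cball c (2 * real (card (simplex_vertices S)) * B / 2 ^ l)"
proof -
  obtain m v k p where card: "card (simplex_vertices S) = Suc m"
    and v: "v ` {..m} = simplex_vertices S"
    and region: "\<forall>j\<le>m. cryst_region m (cube_simplex_vertex m l k p j)"
    and T: "T = convex hull ((\<lambda>j. cryst_param v m (cube_simplex_vertex m l k p j)) ` {..m})"
    using cryst_piecesE[OF assms(2)] by metis
  define a where "a j = cryst_param v m (cube_simplex_vertex m l k p j)" for j
  have vB: "\<forall>i\<le>m. norm (v i) \<le> B" using v simplex_vertices_subset assms(1) by fastforce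
  then have "0 \<le> B" using norm_ge_zero order_trans by blast
  have "norm (a m) \<le> (1 + 2 * real m) * B"
    unfolding a_def using vB region by (intro norm_cryst_param_le) auto
  also have "\<dots> \<le> (1 + 2 * real (card (simplex_vertices S))) * B"
    using card \<open>0 \<le> B\<close> by (intro mult_right_mono) auto
  finally have "norm (a m) \<le> (1 + 2 * real (card (simplex_vertices S))) * B" .
  moreover have "T \<subseteq> cball (a m) (2 * real (card (simplex_vertices S)) * B / 2 ^ l)"
    unfolding T
  proof (rule hull_minimal, safe)
    fix j assume "j \<le> m"
    have "dist (a m) (a j) \<le> real m * (1 / 2 ^ l * (2 * B))"
      unfolding a_def by (intro dist_cryst_param_le[OF vB] ballI abs_cube_simplex_vertex_diff_le)
    also have "\<dots> = 2 * real m * B / 2 ^ l" by simp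
    also have "\<dots> \<le> 2 * real (card (simplex_vertices S)) * B / 2 ^ l"
      using card \<open>0 \<le> B\<close> by (intro divide_right_mono mult_right_mono) auto
    finally show "cryst_param v m (cube_simplex_vertex m l k p j)
        \<in> cball (a m) (2 * real (card (simplex_vertices S)) * B / 2 ^ l)"
      by (simp add: a_def)
  qed
  ultimately show ?thesis using that by blast
qed

lemma cryst_subdiv_eventually_fine:
  assumes "simplicial_complex K" "\<And>i. open (U i)" "(\<Union>i. U i) = UNIV"
  shows "\<exists>L. \<forall>l\<ge>L. \<forall>D\<in>cryst_subdiv K r l. \<exists>i. D \<subseteq> U i"
proof -
  have "finite K" and simplices: "\<forall>S\<in>K. \<exists>n. n simplex S"
    using assms(1) unfolding simplicial_complex_def by auto
  have "compact (\<Union>K)"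
    by (rule compact_Union[OF \<open>finite K\<close>]) (use simplices compact_simplex in blast)
  then obtain B where "B > 0" and "\<forall>x\<in>\<Union>K. norm x \<le> B"
    using compact_imp_bounded bounded_pos by metis
  then have B: "\<Union>K \<subseteq> cball 0 B" by auto
  obtain M where M: "\<forall>S\<in>K. card (simplex_vertices S) \<le> M"
    using \<open>finite K\<close> finite_nat_set_iff_bounded_le[of "(\<lambda>S. card (simplex_vertices S)) ` K"] by auto
  obtain \<epsilon> where "\<epsilon> > 0"
    and lebesgue: "\<And>x. x \<in> cball 0 ((1 + 2 * real M) * B) \<Longrightarrow> \<exists>i. ball x \<epsilon> \<subseteq> U i"
    using Heine_Borel_lemma[of "cball 0 ((1 + 2 * real M) * B)" "range U"] assms(2,3) by auto
  obtain L where L: "2 * real M * B / \<epsilon> < 2 ^ L" using real_arch_pow[of 2] by fastforce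
  have "\<exists>i. D \<subseteq> U i" if "L \<le> l" and D: "D \<in> cryst_subdiv K r l" for l D
  proof -
    obtain S T where "S \<in> K" "T \<in> cryst_pieces r l S" "D face_of T"
      using D unfolding cryst_subdiv_def by blast
    obtain c where c: "norm c \<le> (1 + 2 * real (card (simplex_vertices S))) * B"
      and T: "T \<subseteq> cball c (2 * real (card (simplex_vertices S)) * B / 2 ^ l)"
      using cryst_piece_subset_cball[OF _ \<open>T \<in> cryst_pieces r l S\<close>, of B] B \<open>S \<in> K\<close> by blast
    have card: "real (card (simplex_vertices S)) \<le> M" using M \<open>S \<in> K\<close> by simp
    then have "(1 + 2 * real (card (simplex_vertices S))) * B \<le> (1 + 2 * real M) * B"
      using \<open>B > 0\<close> by (intro mult_right_mono) auto
    then have "c \<in> cball 0 ((1 + 2 * real M) * B)" using c by simp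
    then obtain i where i: "ball c \<epsilon> \<subseteq> U i" using lebesgue by blast
    have "2 * real (card (simplex_vertices S)) * B / 2 ^ l \<le> 2 * real M * B / 2 ^ L"
      using card \<open>B > 0\<close> \<open>L \<le> l\<close> by (intro frac_le mult_right_mono power_increasing) auto
    also have "\<dots> < \<epsilon>" using L \<open>\<epsilon> > 0\<close> by (simp add: divide_less_eq mult.commute)
    finally have "T \<subseteq> ball c \<epsilon>" using T by auto
    then show ?thesis using i face_of_imp_subset[OF \<open>D face_of T\<close>] by blast
  qed
  then show ?thesis by blast
qed

theorem lemma3p12:
  fixes K :: "'a::euclidean_space set set" and r :: "'a rel" and U :: "'i \<Rightarrow> 'a set"
  assumes "ordered_complex K r"
    and "\<And>i. open (U i)" and "\<And>i. convex (U i)"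
    and "(\<Union>i. U i) = UNIV"
    and "locally_finite_family U"
  shows "\<exists>L. \<forall>l\<ge>L.
           (\<forall>i. nice_subcomplex (cryst_subdiv K r l) (complex_restrict (cryst_subdiv K r l) (U i))) \<and>
           (\<forall>S\<in>cryst_subdiv K r l. \<exists>i. S \<in> complex_restrict (cryst_subdiv K r l) (U i))"
proof -
  have K: "simplicial_complex K" using assms(1) unfolding ordered_complex_def by blast
  have nice: "nice_subcomplex (cryst_subdiv K r l) (complex_restrict (cryst_subdiv K r l) (U i))"
    for l i
    using cryst_subdiv_face cryst_subdiv_affine_independent_hull[OF K] assms(3)
    by (rule nice_subcomplex_restrict_convex)
  obtain L where "\<forall>l\<ge>L. \<forall>D\<in>cryst_subdiv K r l. \<exists>i. D \<subseteq> U i"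
    using cryst_subdiv_eventually_fine[OF K assms(2,4)] by blast
  then show ?thesis using nice unfolding complex_restrict_def by blast
qed

end
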